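(* Let $P$ be the uniform distribution on $[a,b]\subset\mathbb{R}$ and let $c,d$ satisfy $a<c<d<b$. For $n\in\mathbb{N}$, $n\geq2$, let $\alpha_n$ be a conditional optimal set of $n$-points for $P$ with respect to $\beta=\{c,d\}$ such that $\alpha_n$ contains $k$ elements of $[a,c]$, $\ell$ elements of $[c,d]$ and $m$ elements of $[d,b]$, where $k,\ell,m\in\mathbb{N}$, $k,m\geq1$, $\ell\geq2$. Then $k+\ell+m=n+2$, \[\alpha_n\cap[a,c]=\Big\{a+\tfrac{(2j-1)(c-a)}{2k-1}:1\leq j\leq k\Big\},\quad \alpha_n\cap[c,d]=\Big\{c+\tfrac{j-1}{\ell-1}(d-c):1\leq j\leq\ell\Big\},\] \[\alpha_n\cap[d,b]=\Big\{d+\tfrac{2(j-1)(b-d)}{2m-1}:1\leq j\leq m\Big\},\] and the conditional quantization error is \[V_n=\frac1{3(b-a)}\Big(\frac{(c-a)^3}{(2k-1)^2}+\frac14\,\frac{(d-c)^3}{(\ell-1)^2}+\frac{(b-d)^3}{(2m-1)^2}\Big).\]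
   Context: Conditional quantization on $\mathbb{R}$: for a Borel probability measure $P$ on $\mathbb{R}$ and a finite set $\beta\subset\mathbb{R}$ with $\mathrm{card}(\beta)=r$, for $n\geq r$ the $n$th conditional quantization error is $V_n=\inf\{\int\min_{a'\in\alpha\cup\beta}(x-a')^2\,dP(x):\alpha\subset\mathbb{R},\ \mathrm{card}(\alpha)\leq n-r\}$. A set $\alpha\cup\beta$ attaining this infimum, such that each $b'\in\beta$ has a Voronoi region (points at least as close to $b'$ as to any other point of the set) of positive $P$-measure, is a conditional optimal set of $n$-points with respect to $\beta$; it contains $\beta$. *)

theory Defs
  imports "HOL-Probability.Probability"
begin

definition uniform_interval :: "real \<Rightarrow> real \<Rightarrow> real measure" where
  "uniform_interval a b = uniform_measure lborel {a..b}"

definition cond_distortion :: "real measure \<Rightarrow> real set \<Rightarrow> real set \<Rightarrow> real" where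
  "cond_distortion P \<beta> \<alpha> = (\<integral>x. Min ((\<lambda>p. (x - p)\<^sup>2) ` (\<alpha> \<union> \<beta>)) \<partial>P)"

definition cond_qerror :: "real measure \<Rightarrow> real set \<Rightarrow> nat \<Rightarrow> real" where
  "cond_qerror P \<beta> n =
     (INF \<alpha> \<in> {\<alpha>. finite \<alpha> \<and> card \<alpha> \<le> n - card \<beta>}. cond_distortion P \<beta> \<alpha>)"

definition voronoi :: "real set \<Rightarrow> real \<Rightarrow> real set" where
  "voronoi S p = {x. \<forall>q\<in>S. \<bar>x - p\<bar> \<le> \<bar>x - q\<bar>}"

definition cond_optimal_set :: "real measure \<Rightarrow> real set \<Rightarrow> nat \<Rightarrow> real set \<Rightarrow> bool" where
  "cond_optimal_set P \<beta> n \<gamma> \<longleftrightarrow>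
     card \<beta> \<le> n \<and>
     (\<exists>\<alpha>. finite \<alpha> \<and> card \<alpha> \<le> n - card \<beta> \<and> \<gamma> = \<alpha> \<union> \<beta> \<and>
          cond_distortion P \<beta> \<alpha> = cond_qerror P \<beta> n) \<and>
     (\<forall>p\<in>\<beta>. measure P (voronoi \<gamma> p) > 0)"

end

theory Submission
  imports Defs
begin

(* For the uniform distribution the distortion of a finite set S is the integral over [a, b] of
   the squared distance to S, divided by b - a. As c and d belong to the optimal set, the integral
   splits into independent problems on [a, c], [c, d] and [d, b], in which c, resp. c and d,
   resp. d are prescribed points. Splitting off one Voronoi cell at a time and using
   (x + y)^3 / (J + 1)^2 <= x^3 / J^2 + y^3, with equality iff x = J y, shows that on an interval
   of length L the integral is at least L^3 / (12 j^2) for j + 1 points containing both endpoints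
   and at least L^3 / (3 (2k - 1)^2) for k points containing one endpoint, with equality exactly
   for the equally spaced configurations. An optimal set attains these bounds (after moving stray
   points into [a, b], which does not increase the distortion), and it uses all n points because
   one more point in [a, c] would strictly lower the error. *)

section \<open>Squared distance to a finite set\<close>

definition nearest_sqdist :: "real set \<Rightarrow> real \<Rightarrow> real" where
  "nearest_sqdist S x = Min ((\<lambda>p. (x - p)\<^sup>2) ` S)"

lemma nearest_sqdist_singleton: "nearest_sqdist {p} x = (x - p)\<^sup>2"
  by (simp add: nearest_sqdist_def)

lemma nearest_sqdist_insert:
  "finite S \<Longrightarrow> S \<noteq> {} \<Longrightarrow> nearest_sqdist (insert p S) x = min ((x - p)\<^sup>2) (nearest_sqdist S x)"
  by (simp add: nearest_sqdist_def)

lemma nearest_sqdist_le: "finite S \<Longrightarrow> p \<in> S \<Longrightarrow> nearest_sqdist S x \<le> (x - p)\<^sup>2"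
  by (simp add: nearest_sqdist_def)

lemma nearest_sqdist_attained:
  assumes "finite S" "S \<noteq> {}"
  obtains p where "p \<in> S" "nearest_sqdist S x = (x - p)\<^sup>2"
proof -
  have "nearest_sqdist S x \<in> (\<lambda>p. (x - p)\<^sup>2) ` S"
    unfolding nearest_sqdist_def by (rule Min_in) (use assms in auto)
  then show ?thesis
    using that by blast
qed

lemma nearest_sqdist_nonneg: "finite S \<Longrightarrow> S \<noteq> {} \<Longrightarrow> 0 \<le> nearest_sqdist S x"
  by (metis nearest_sqdist_attained zero_le_power2)

lemma continuous_on_nearest_sqdist: "finite S \<Longrightarrow> S \<noteq> {} \<Longrightarrow> continuous_on A (nearest_sqdist S)"
proof (induction S rule: finite_ne_induct)
  case (insert p S)
  then have eq: "nearest_sqdist (insert p S) = (\<lambda>y. min ((y - p)\<^sup>2) (nearest_sqdist S y))"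
    by (simp add: fun_eq_iff nearest_sqdist_insert)
  show ?case
    unfolding eq by (rule continuous_on_min[OF _ insert.IH]) (intro continuous_intros)
qed (simp add: nearest_sqdist_singleton[abs_def] continuous_intros)

lemma nearest_sqdist_le_nearest_sqdist:
  assumes "finite S" "S \<noteq> {}" "finite T"
    and "\<And>p. p \<in> S \<Longrightarrow> \<exists>q\<in>T. \<bar>x - q\<bar> \<le> \<bar>x - p\<bar>"
  shows "nearest_sqdist T x \<le> nearest_sqdist S x"
proof -
  obtain p where p: "p \<in> S" "nearest_sqdist S x = (x - p)\<^sup>2"
    using nearest_sqdist_attained assms(1,2) .
  then obtain q where "q \<in> T" "\<bar>x - q\<bar> \<le> \<bar>x - p\<bar>"
    using assms(4) by blast
  then have "nearest_sqdist T x \<le> (x - q)\<^sup>2" "(x - q)\<^sup>2 \<le> (x - p)\<^sup>2"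
    using assms(3) nearest_sqdist_le abs_le_square_iff by blast+
  with p show ?thesis by linarith
qed

lemma nearest_sqdist_Int_atMost:
  assumes "finite S" "c \<in> S" "x \<le> c"
  shows "nearest_sqdist (S \<inter> {..c}) x = nearest_sqdist S x"
proof (rule antisym)
  show "nearest_sqdist (S \<inter> {..c}) x \<le> nearest_sqdist S x"
  proof (rule nearest_sqdist_le_nearest_sqdist)
    fix p assume "p \<in> S"
    then show "\<exists>q\<in>S \<inter> {..c}. \<bar>x - q\<bar> \<le> \<bar>x - p\<bar>"
      using assms by (cases "p \<le> c") (auto intro: bexI[of _ p] bexI[of _ c])
  qed (use assms in auto)
qed (rule nearest_sqdist_le_nearest_sqdist; use assms in auto)

lemma nearest_sqdist_Int_atLeast:
  assumes "finite S" "c \<in> S" "c \<le> x"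
  shows "nearest_sqdist (S \<inter> {c..}) x = nearest_sqdist S x"
proof (rule antisym)
  show "nearest_sqdist (S \<inter> {c..}) x \<le> nearest_sqdist S x"
  proof (rule nearest_sqdist_le_nearest_sqdist)
    fix p assume "p \<in> S"
    then show "\<exists>q\<in>S \<inter> {c..}. \<bar>x - q\<bar> \<le> \<bar>x - p\<bar>"
      using assms by (cases "c \<le> p") (auto intro: bexI[of _ p] bexI[of _ c])
  qed (use assms in auto)
qed (rule nearest_sqdist_le_nearest_sqdist; use assms in auto)

lemma nearest_sqdist_reflect: "nearest_sqdist (uminus ` S) x = nearest_sqdist S (- x)"
  by (simp add: nearest_sqdist_def image_image power2_commute add.commute)

lemma integrable_nearest_sqdist: "finite S \<Longrightarrow> S \<noteq> {} \<Longrightarrow> nearest_sqdist S integrable_on {u..v}"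
  by (simp add: integrable_continuous_interval continuous_on_nearest_sqdist)

lemma integral_nearest_sqdist_split:
  assumes "finite S" "p \<in> S" "u \<le> p" "p \<le> v"
  shows "integral {u..v} (nearest_sqdist S)
    = integral {u..p} (nearest_sqdist (S \<inter> {..p})) + integral {p..v} (nearest_sqdist (S \<inter> {p..}))"
proof -
  have int: "nearest_sqdist S integrable_on {u..v}"
    using assms(1,2) by (intro integrable_nearest_sqdist) auto
  have "integral {u..v} (nearest_sqdist S)
      = integral {u..p} (nearest_sqdist S) + integral {p..v} (nearest_sqdist S)"
    using Henstock_Kurzweil_Integration.integral_combine[OF assms(3,4) int] by simp
  also have "integral {u..p} (nearest_sqdist S) = integral {u..p} (nearest_sqdist (S \<inter> {..p}))"
    using assms by (intro integral_cong) (simp add: nearest_sqdist_Int_atMost)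
  also have "integral {p..v} (nearest_sqdist S) = integral {p..v} (nearest_sqdist (S \<inter> {p..}))"
    using assms by (intro integral_cong) (simp add: nearest_sqdist_Int_atLeast)
  finally show ?thesis .
qed

lemma integral_nearest_sqdist_reflect:
  "integral {u..v} (nearest_sqdist S) = integral {-v..-u} (nearest_sqdist (uminus ` S))"
  unfolding nearest_sqdist_reflect[abs_def]
  by (rule Henstock_Kurzweil_Integration.integral_reflect_real[symmetric])

lemma integral_nearest_sqdist_singleton:
  assumes "u \<le> v"
  shows "integral {u..v} (nearest_sqdist {p}) = ((v - p)^3 - (u - p)^3) / 3"
proof -
  have "((\<lambda>x. (x - p)\<^sup>2) has_integral (v - p)^3 / 3 - (u - p)^3 / 3) {u..v}"
    using assms
    by (intro fundamental_theorem_of_calculus)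
       (auto intro!: derivative_eq_intros simp: has_real_derivative_iff_has_vector_derivative[symmetric]
             power2_eq_square)
  moreover have "nearest_sqdist {p} = (\<lambda>x. (x - p)\<^sup>2)"
    by (simp add: fun_eq_iff nearest_sqdist_singleton)
  ultimately show ?thesis
    by (simp add: integral_unique diff_divide_distrib)
qed

lemma integral_nearest_sqdist_pair:
  assumes "u \<le> v"
  shows "integral {u..v} (nearest_sqdist {u, v}) = (v - u)^3 / 12"
proof -
  define m where "m = (u + v) / 2"
  have m: "u \<le> m" "m \<le> v"
    using assms by (auto simp: m_def)
  have int: "nearest_sqdist {u, v} integrable_on {u..v}"
    by (simp add: integrable_nearest_sqdist)
  have "integral {u..v} (nearest_sqdist {u, v})
      = integral {u..m} (nearest_sqdist {u, v}) + integral {m..v} (nearest_sqdist {u, v})"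
    using Henstock_Kurzweil_Integration.integral_combine[OF m int] by simp
  also have "integral {u..m} (nearest_sqdist {u, v}) = integral {u..m} (nearest_sqdist {u})"
    by (intro integral_cong) (auto simp: nearest_sqdist_insert nearest_sqdist_singleton m_def abs_le_square_iff[symmetric])
  also have "integral {m..v} (nearest_sqdist {u, v}) = integral {m..v} (nearest_sqdist {v})"
    by (intro integral_cong) (auto simp: nearest_sqdist_insert nearest_sqdist_singleton m_def abs_le_square_iff[symmetric])
  finally show ?thesis
    using m by (simp add: integral_nearest_sqdist_singleton) (simp add: m_def field_simps power3_eq_cube)
qed

lemma integral_nearest_sqdist_below_Min:
  assumes "finite T" "T \<noteq> {}" "u \<le> Min T" "Min T \<le> v"
  shows "integral {u..v} (nearest_sqdist T) = (Min T - u)^3 / 3 + integral {Min T..v} (nearest_sqdist T)"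
proof -
  have "T \<inter> {..Min T} = {Min T}" "T \<inter> {Min T..} = T"
    using Min_in[OF assms(1,2)] Min_le[OF assms(1)] by fastforce+
  then show ?thesis
    using integral_nearest_sqdist_split[of T "Min T" u v] Min_in[OF assms(1,2)] assms
    by (simp add: integral_nearest_sqdist_singleton power3_eq_cube algebra_simps)
qed

lemma integral_nearest_sqdist_insert_above_Max:
  assumes "finite S" "S \<noteq> {}" "u \<le> Max S" "Max S < v"
  shows "integral {u..v} (nearest_sqdist (insert v S))
    = integral {u..Max S} (nearest_sqdist S) + (v - Max S)^3 / 12"
proof -
  have "insert v S \<inter> {..Max S} = S" "insert v S \<inter> {Max S..} = {Max S, v}"
    using Max_in[OF assms(1,2)] Max_ge[OF assms(1)] assms(4) by fastforce+
  moreover have "finite (insert v S)" "Max S \<in> insert v S"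
    using Max_in[OF assms(1,2)] assms(1) by simp_all
  ultimately show ?thesis
    using integral_nearest_sqdist_split[of "insert v S" "Max S" u v] assms(3,4)
    by (simp add: integral_nearest_sqdist_pair)
qed

lemma Min_less_Max:
  fixes S :: "'a::linorder set"
  assumes "finite S" "2 \<le> card S"
  shows "Min S < Max S"
proof (rule ccontr)
  assume "\<not> Min S < Max S"
  then have "S \<subseteq> {Min S}"
    using Min_le[OF assms(1)] Max_ge[OF assms(1)] by fastforce
  then show False
    using card_mono[of "{Min S}" S] assms by simp
qed

section \<open>Equally spaced grids\<close>

definition grid :: "real \<Rightarrow> real \<Rightarrow> nat \<Rightarrow> real set" where
  "grid x h j = (\<lambda>i. x + real i * h) ` {..j}"

lemma finite_grid [simp]: "finite (grid x h j)"
  by (simp add: grid_def)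

lemma grid_0 [simp]: "grid x h 0 = {x}"
  by (simp add: grid_def)

lemma grid_Suc: "grid x h (Suc j) = insert (x + real (Suc j) * h) (grid x h j)"
  by (simp add: grid_def atMost_Suc)

lemma start_in_grid: "x \<in> grid x h j"
  unfolding grid_def by (rule image_eqI[of _ _ 0]) auto

lemma end_in_grid: "x + real j * h \<in> grid x h j"
  unfolding grid_def by auto

lemma grid_subset: "0 \<le> h \<Longrightarrow> grid x h j \<subseteq> {x..x + real j * h}"
  by (auto simp: grid_def intro!: mult_right_mono)

lemma card_grid: "h \<noteq> 0 \<Longrightarrow> card (grid x h j) = Suc j"
  unfolding grid_def by (subst card_image) (auto simp: inj_on_def)

lemma Min_grid: "0 \<le> h \<Longrightarrow> Min (grid x h j) = x"
  using grid_subset start_in_grid by (intro Min_eqI) fastforce+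

lemma Max_grid: "0 \<le> h \<Longrightarrow> Max (grid x h j) = x + real j * h"
  using grid_subset end_in_grid by (intro Max_eqI) fastforce+

lemma grid_reflect: "uminus ` grid x h j = grid (- x - real j * h) h j"
proof -
  have rev: "(\<lambda>i. j - i) ` {..j} = {..j}"
  proof (intro equalityI subsetI)
    fix i assume "i \<in> {..j}"
    then show "i \<in> (\<lambda>i. j - i) ` {..j}"
      by (intro image_eqI[of _ _ "j - i"]) auto
  qed auto
  have "uminus ` grid x h j = (\<lambda>i. - x - real j * h + real (j - i) * h) ` {..j}"
    unfolding grid_def image_image by (intro image_cong) (auto simp: of_nat_diff algebra_simps)
  also have "\<dots> = grid (- x - real j * h) h j"
    unfolding grid_def by (subst rev[symmetric]) (simp add: image_image)
  finally show ?thesis .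
qed

section \<open>Optimal points on one interval\<close>

lemma sum_cubes_div_square:
  fixes J x y :: real
  assumes "0 < J" "0 \<le> x" "0 \<le> y"
  shows "(x + y)^3 / (J + 1)\<^sup>2 \<le> x^3 / J\<^sup>2 + y^3"
    and "(x + y)^3 / (J + 1)\<^sup>2 = x^3 / J\<^sup>2 + y^3 \<longleftrightarrow> x = J * y"
proof -
  have gap: "x^3 / J\<^sup>2 + y^3 - (x + y)^3 / (J + 1)\<^sup>2
      = (x - J * y)\<^sup>2 * ((2 * J + 1) * x + (J\<^sup>2 + 2 * J) * y) / (J\<^sup>2 * (J + 1)\<^sup>2)"
    using assms by (simp add: field_simps) (simp add: algebra_simps power2_eq_square power3_eq_cube)
  have pos: "0 \<le> (2 * J + 1) * x + (J\<^sup>2 + 2 * J) * y"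
    using assms by simp
  show "(x + y)^3 / (J + 1)\<^sup>2 \<le> x^3 / J\<^sup>2 + y^3"
    using gap pos by (smt (verit) divide_nonneg_nonneg mult_nonneg_nonneg zero_le_power2)
  have "x = J * y" if "(2 * J + 1) * x + (J\<^sup>2 + 2 * J) * y = 0"
  proof -
    have "0 \<le> (2 * J + 1) * x" "0 \<le> (J\<^sup>2 + 2 * J) * y"
      using assms by simp_all
    then have "(2 * J + 1) * x = 0" "(J\<^sup>2 + 2 * J) * y = 0"
      using that by linarith+
    moreover have "0 < J\<^sup>2 + 2 * J"
      using assms by (simp add: add_nonneg_pos)
    ultimately show ?thesis
      using assms by simp
  qed
  then show "(x + y)^3 / (J + 1)\<^sup>2 = x^3 / J\<^sup>2 + y^3 \<longleftrightarrow> x = J * y"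
    using gap assms by auto
qed

text \<open>The induction step shared by the one-interval bounds: an interval of length \<open>x\<close>
  carrying \<open>J\<close> optimal cells is extended by a neighbouring piece of length \<open>y\<close> whose
  contribution is \<open>y^3/c\<close>.\<close>

lemma lower_bound_add_cube:
  fixes c J x y I :: real
  assumes "0 < c" "0 < J" "0 \<le> x" "0 \<le> y" "x^3 / (c * J\<^sup>2) \<le> I"
  shows "(x + y)^3 / (c * (J + 1)\<^sup>2) \<le> I + y^3 / c \<and>
    (I + y^3 / c = (x + y)^3 / (c * (J + 1)\<^sup>2) \<longleftrightarrow> I = x^3 / (c * J\<^sup>2) \<and> x = J * y)"
proof -
  define A where "A = (x + y)^3 / (J + 1)\<^sup>2"
  define B where "B = x^3 / J\<^sup>2 + y^3"
  have AB: "A \<le> B" "A = B \<longleftrightarrow> x = J * y"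
    unfolding A_def B_def using sum_cubes_div_square[OF assms(2-4)] by auto
  have "(x + y)^3 / (c * (J + 1)\<^sup>2) = A / c" "x^3 / (c * J\<^sup>2) + y^3 / c = B / c"
    unfolding A_def B_def using assms by (simp_all add: field_simps)
  moreover have "A / c \<le> B / c" "A / c = B / c \<longleftrightarrow> x = J * y"
    using AB assms(1) by (simp_all add: divide_right_mono)
  ultimately show ?thesis
    using assms(5) by linarith
qed

lemma insert_eq_grid_Suc_iff:
  assumes "finite S" "S \<noteq> {}" "Max S < v" "0 < j" "u < v"
  shows "(S = grid u ((Max S - u) / real j) j \<and> Max S - u = real j * (v - Max S))
    \<longleftrightarrow> insert v S = grid u ((v - u) / real (Suc j)) (Suc j)"
proof
  assume *: "S = grid u ((Max S - u) / real j) j \<and> Max S - u = real j * (v - Max S)"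
  then have h: "(Max S - u) / real j = v - Max S" "(v - u) / real (Suc j) = v - Max S"
    using assms(4) by (auto simp: field_simps)
  have "u + real (Suc j) * (v - Max S) = v"
    using * by (simp add: algebra_simps)
  then show "insert v S = grid u ((v - u) / real (Suc j)) (Suc j)"
    unfolding h(2) grid_Suc using * h(1) by simp
next
  define h where "h = (v - u) / real (Suc j)"
  assume *: "insert v S = grid u ((v - u) / real (Suc j)) (Suc j)"
  have h: "0 < h" "v = u + real (Suc j) * h"
    using assms(5) by (simp_all add: h_def)
  then have "v \<notin> grid u h j"
    using grid_subset[of h u j] by (auto simp: algebra_simps)
  moreover have "v \<notin> S"
    using assms Max_ge by fastforce
  ultimately have S: "S = grid u h j"
    using * h by (simp add: h_def[symmetric] grid_Suc) (metis insert_ident)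
  then have "Max S = u + real j * h"
    using h by (simp add: Max_grid)
  then show "S = grid u ((Max S - u) / real j) j \<and> Max S - u = real j * (v - Max S)"
    using S h assms(4) by (simp add: algebra_simps)
qed

lemma integral_nearest_sqdist_both_ends_grid:
  assumes "1 \<le> j" "finite T" "T \<subseteq> {u..v}" "u \<in> T" "v \<in> T" "card T = Suc j" "u < v"
  shows "(v - u)^3 / (12 * (real j)\<^sup>2) \<le> integral {u..v} (nearest_sqdist T) \<and>
    (integral {u..v} (nearest_sqdist T) = (v - u)^3 / (12 * (real j)\<^sup>2)
      \<longleftrightarrow> T = grid u ((v - u) / real j) j)"
  using assms
proof (induction j arbitrary: v T rule: nat_induct_at_least)
  case base
  have "T = {u, v}"
    using base by (intro card_subset_eq[symmetric]) auto
  moreover have "grid u (v - u) 1 = {u, v}"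
    by (simp add: grid_Suc insert_commute)
  ultimately show ?case
    using base by (simp add: integral_nearest_sqdist_pair)
next
  case (Suc j)
  define S where "S = T - {v}"
  define w where "w = Max S"
  define I where "I = integral {u..w} (nearest_sqdist S)"
  have T: "T = insert v S"
    using Suc.prems by (auto simp: S_def)
  have S: "finite S" "u \<in> S" "card S = Suc j" "S \<noteq> {}"
    using Suc.prems by (auto simp: S_def)
  have "w \<in> S"
    unfolding w_def using S by (intro Max_in)
  then have "w < v"
    using Suc.prems(2) by (auto simp: S_def)
  have S_sub: "S \<subseteq> {u..w}"
    using Suc.prems(2) Max_ge[OF S(1)] unfolding w_def S_def by force
  have "Min S = u"
    using S_sub S(1,2) by (intro Min_eqI) auto
  then have "u < w"
    using Min_less_Max[OF S(1)] S(3) Suc.hyps unfolding w_def by simp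
  have split: "integral {u..v} (nearest_sqdist T) = I + (v - w)^3 / 12"
    using integral_nearest_sqdist_insert_above_Max[OF S(1,4), of u v] \<open>u < w\<close> \<open>w < v\<close>
    unfolding T I_def w_def by simp
  have IH: "(w - u)^3 / (12 * (real j)\<^sup>2) \<le> I \<and>
      (I = (w - u)^3 / (12 * (real j)\<^sup>2) \<longleftrightarrow> S = grid u ((w - u) / real j) j)"
    unfolding I_def using Suc.IH[of S w] S S_sub \<open>w \<in> S\<close> \<open>u < w\<close> by blast
  have sums: "(w - u) + (v - w) = v - u" "real j + 1 = real (Suc j)"
    by simp_all
  have step: "(v - u)^3 / (12 * (real (Suc j))\<^sup>2) \<le> I + (v - w)^3 / 12 \<and>
      (I + (v - w)^3 / 12 = (v - u)^3 / (12 * (real (Suc j))\<^sup>2)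
        \<longleftrightarrow> I = (w - u)^3 / (12 * (real j)\<^sup>2) \<and> w - u = real j * (v - w))"
    using lower_bound_add_cube[of 12 "real j" "w - u" "v - w" I, unfolded sums] IH Suc.hyps \<open>u < w\<close> \<open>w < v\<close>
    by simp
  have "(S = grid u ((w - u) / real j) j \<and> w - u = real j * (v - w))
      \<longleftrightarrow> T = grid u ((v - u) / real (Suc j)) (Suc j)"
    using insert_eq_grid_Suc_iff[of S v j u] S \<open>w < v\<close> Suc.hyps Suc.prems(6) unfolding T w_def by simp
  then show ?case
    using split step IH by auto
qed

definition right_end_config :: "real \<Rightarrow> real \<Rightarrow> nat \<Rightarrow> real set" where
  "right_end_config u v k = {u + (2 * real j - 1) * (v - u) / (2 * real k - 1) | j. 1 \<le> j \<and> j \<le> k}"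

definition both_ends_config :: "real \<Rightarrow> real \<Rightarrow> nat \<Rightarrow> real set" where
  "both_ends_config u v l = {u + (real j - 1) / (real l - 1) * (v - u) | j. 1 \<le> j \<and> j \<le> l}"

definition left_end_config :: "real \<Rightarrow> real \<Rightarrow> nat \<Rightarrow> real set" where
  "left_end_config u v m = {u + 2 * (real j - 1) * (v - u) / (2 * real m - 1) | j. 1 \<le> j \<and> j \<le> m}"

lemma setcompr_eq_image_Suc: "{f j | j. 1 \<le> j \<and> j \<le> Suc K} = (\<lambda>i. f (Suc i)) ` {..K}"
proof (intro equalityI subsetI)
  fix x assume "x \<in> {f j | j. 1 \<le> j \<and> j \<le> Suc K}"
  then obtain j where "1 \<le> j" "j \<le> Suc K" "x = f j"
    by blast
  then show "x \<in> (\<lambda>i. f (Suc i)) ` {..K}"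
    by (intro image_eqI[of _ _ "j - 1"]) auto
qed auto

lemma odd_multiple_span:
  assumes "1 \<le> k" "h = (v - u) / (2 * real k - 1)"
  shows "h + real (k - 1) * (2 * h) = v - u"
proof -
  have "2 * real k - 1 \<noteq> 0"
    using assms(1) by simp
  moreover have "h + real (k - 1) * (2 * h) = (2 * real k - 1) * h"
    using assms(1) by (simp add: of_nat_diff algebra_simps)
  ultimately show ?thesis
    by (simp add: assms(2))
qed

lemma right_end_config_eq_grid:
  assumes "1 \<le> k"
  shows "right_end_config u v k
    = grid (u + (v - u) / (2 * real k - 1)) (2 * ((v - u) / (2 * real k - 1))) (k - 1)"
proof -
  define D where "D = 2 * real k - 1"
  obtain K where K: "k = Suc K"
    using assms by (cases k) auto
  have "0 < D"
    using assms by (simp add: D_def)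
  have "right_end_config u v k = (\<lambda>i. u + (2 * real (Suc i) - 1) * (v - u) / D) ` {..K}"
    unfolding right_end_config_def D_def K by (rule setcompr_eq_image_Suc)
  also have "\<dots> = grid (u + (v - u) / D) (2 * ((v - u) / D)) K"
    unfolding grid_def using \<open>0 < D\<close> by (intro image_cong) (simp_all add: field_simps)
  finally show ?thesis
    by (simp add: D_def K)
qed

lemma both_ends_config_eq_grid:
  assumes "2 \<le> l"
  shows "both_ends_config u v l = grid u ((v - u) / real (l - 1)) (l - 1)"
proof -
  obtain J where J: "l = Suc J" "0 < J"
    using assms by (cases l) auto
  then show ?thesis
    unfolding both_ends_config_def grid_def J(1) setcompr_eq_image_Suc
    by (intro image_cong) simp_all
qed

lemma left_end_config_eq_grid:
  assumes "1 \<le> m"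
  shows "left_end_config u v m = grid u (2 * ((v - u) / (2 * real m - 1))) (m - 1)"
proof -
  obtain M where M: "m = Suc M"
    using assms by (cases m) auto
  then show ?thesis
    unfolding left_end_config_def grid_def M setcompr_eq_image_Suc
    by (intro image_cong) simp_all
qed

lemma right_end_config_props:
  assumes "1 \<le> k" "u < v"
  shows "finite (right_end_config u v k)" "right_end_config u v k \<subseteq> {u<..v}"
    "v \<in> right_end_config u v k" "card (right_end_config u v k) = k"
proof -
  define h where "h = (v - u) / (2 * real k - 1)"
  have config: "right_end_config u v k = grid (u + h) (2 * h) (k - 1)"
    using assms by (simp add: right_end_config_eq_grid h_def)
  have h: "0 < h" "u + h + real (k - 1) * (2 * h) = v"
    using assms odd_multiple_span[OF assms(1) h_def] by (simp add: h_def, linarith)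
  show "finite (right_end_config u v k)" "card (right_end_config u v k) = k"
    using assms h by (simp_all add: config card_grid)
  show "right_end_config u v k \<subseteq> {u<..v}"
    using grid_subset[of "2 * h" "u + h" "k - 1"] h by (auto simp: config)
  show "v \<in> right_end_config u v k"
    using end_in_grid[of "u + h" "k - 1" "2 * h"] h by (simp add: config)
qed

lemma both_ends_config_props:
  assumes "2 \<le> l" "u < v"
  shows "finite (both_ends_config u v l)" "both_ends_config u v l \<subseteq> {u..v}"
    "u \<in> both_ends_config u v l" "v \<in> both_ends_config u v l" "card (both_ends_config u v l) = l"
proof -
  define h where "h = (v - u) / real (l - 1)"
  have config: "both_ends_config u v l = grid u h (l - 1)"
    using assms by (simp add: both_ends_config_eq_grid h_def)
  have h: "0 < h" "u + real (l - 1) * h = v"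
    using assms by (simp_all add: h_def)
  show "finite (both_ends_config u v l)" "card (both_ends_config u v l) = l"
    using assms h by (simp_all add: config card_grid)
  show "both_ends_config u v l \<subseteq> {u..v}"
    using grid_subset[of h u "l - 1"] h by (simp add: config)
  show "u \<in> both_ends_config u v l" "v \<in> both_ends_config u v l"
    using start_in_grid[of u h "l - 1"] end_in_grid[of u "l - 1" h] h by (simp_all add: config)
qed

lemma left_end_config_props:
  assumes "1 \<le> m" "u < v"
  shows "finite (left_end_config u v m)" "left_end_config u v m \<subseteq> {u..<v}"
    "u \<in> left_end_config u v m" "card (left_end_config u v m) = m"
proof -
  define h where "h = (v - u) / (2 * real m - 1)"
  have config: "left_end_config u v m = grid u (2 * h) (m - 1)"
    using assms by (simp add: left_end_config_eq_grid h_def)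
  have h: "0 < h" "u + real (m - 1) * (2 * h) = v - h"
    using assms odd_multiple_span[OF assms(1) h_def] by (simp add: h_def, linarith)
  show "finite (left_end_config u v m)" "card (left_end_config u v m) = m"
    using assms h by (simp_all add: config card_grid)
  show "left_end_config u v m \<subseteq> {u..<v}"
    using grid_subset[of "2 * h" u "m - 1"] h by (auto simp: config)
  show "u \<in> left_end_config u v m"
    using start_in_grid[of u "2 * h" "m - 1"] by (simp add: config)
qed

lemma integral_nearest_sqdist_both_ends:
  assumes "2 \<le> l" "finite T" "T \<subseteq> {u..v}" "u \<in> T" "v \<in> T" "card T = l" "u < v"
  shows "(v - u)^3 / (12 * (real l - 1)\<^sup>2) \<le> integral {u..v} (nearest_sqdist T) \<and>
    (integral {u..v} (nearest_sqdist T) = (v - u)^3 / (12 * (real l - 1)\<^sup>2)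
      \<longleftrightarrow> T = both_ends_config u v l)"
proof -
  obtain j where j: "l = Suc j" "1 \<le> j"
    using assms(1) by (cases l) auto
  then show ?thesis
    using integral_nearest_sqdist_both_ends_grid[OF j(2) assms(2-5) _ assms(7)] assms(6)
      both_ends_config_eq_grid[OF assms(1)]
    by simp
qed

lemma grid_from_Min_iff:
  assumes "finite T" "T \<noteq> {}" "Min T < v" "0 < K" "u < v"
  defines "h \<equiv> (v - u) / (2 * real K + 1)"
  shows "(T = grid (Min T) ((v - Min T) / real K) K \<and> v - Min T = 2 * real K * (Min T - u))
    \<longleftrightarrow> T = grid (u + h) (2 * h) K"
proof
  assume *: "T = grid (Min T) ((v - Min T) / real K) K \<and> v - Min T = 2 * real K * (Min T - u)"
  then have "Min T = u + h" "(v - Min T) / real K = 2 * h"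
    using assms(4) by (auto simp: h_def field_simps)
  with * show "T = grid (u + h) (2 * h) K"
    by simp
next
  assume *: "T = grid (u + h) (2 * h) K"
  have "0 < h"
    using assms(4,5) by (simp add: h_def)
  then have "Min T = u + h"
    using * by (simp add: Min_grid)
  moreover have "v - (u + h) = 2 * real K * h"
    using assms(4) by (simp add: h_def field_simps)
  ultimately show "T = grid (Min T) ((v - Min T) / real K) K \<and> v - Min T = 2 * real K * (Min T - u)"
    using * assms(4) by simp
qed

lemma integral_nearest_sqdist_right_end_grid:
  assumes "1 \<le> K" "finite T" "T \<subseteq> {u..v}" "v \<in> T" "card T = Suc K" "u < v"
  defines "h \<equiv> (v - u) / (2 * real K + 1)"
  shows "(v - u)^3 / (3 * (2 * real K + 1)\<^sup>2) \<le> integral {u..v} (nearest_sqdist T) \<and>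
    (integral {u..v} (nearest_sqdist T) = (v - u)^3 / (3 * (2 * real K + 1)\<^sup>2)
      \<longleftrightarrow> T = grid (u + h) (2 * h) K)"
proof -
  define t where "t = Min T"
  define I where "I = integral {t..v} (nearest_sqdist T)"
  have "T \<noteq> {}"
    using assms(4) by auto
  then have "t \<in> T" "T \<subseteq> {t..v}"
    using assms(2,3) by (auto simp: t_def)
  then have "u \<le> t"
    using assms(3) by auto
  have "Max T = v"
    using assms(2-4) by (intro Max_eqI) auto
  then have "t < v"
    using Min_less_Max[OF assms(2)] assms(1,5) unfolding t_def by simp
  have split: "integral {u..v} (nearest_sqdist T) = I + (t - u)^3 / 3"
    using integral_nearest_sqdist_below_Min[OF assms(2) \<open>T \<noteq> {}\<close>, of u v] \<open>u \<le> t\<close> \<open>t < v\<close>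
    unfolding I_def t_def by linarith
  have "12 * (real K)\<^sup>2 = 3 * (2 * real K)\<^sup>2"
    by (simp add: power_mult_distrib)
  then have inner: "(v - t)^3 / (3 * (2 * real K)\<^sup>2) \<le> I \<and>
      (I = (v - t)^3 / (3 * (2 * real K)\<^sup>2) \<longleftrightarrow> T = grid t ((v - t) / real K) K)"
    using integral_nearest_sqdist_both_ends_grid[OF assms(1,2) \<open>T \<subseteq> {t..v}\<close> \<open>t \<in> T\<close> assms(4,5) \<open>t < v\<close>]
    unfolding I_def by simp
  have sum: "(v - t) + (t - u) = v - u"
    by simp
  have step: "(v - u)^3 / (3 * (2 * real K + 1)\<^sup>2) \<le> I + (t - u)^3 / 3 \<and>
      (I + (t - u)^3 / 3 = (v - u)^3 / (3 * (2 * real K + 1)\<^sup>2)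
        \<longleftrightarrow> I = (v - t)^3 / (3 * (2 * real K)\<^sup>2) \<and> v - t = 2 * real K * (t - u))"
    using lower_bound_add_cube[of 3 "2 * real K" "v - t" "t - u" I, unfolded sum] inner assms(1)
      \<open>u \<le> t\<close> \<open>t < v\<close>
    by simp
  have "(T = grid t ((v - t) / real K) K \<and> v - t = 2 * real K * (t - u)) \<longleftrightarrow> T = grid (u + h) (2 * h) K"
    using grid_from_Min_iff[of T v K u] assms \<open>T \<noteq> {}\<close> \<open>t < v\<close> by (simp add: t_def)
  then show ?thesis
    using split step inner by auto
qed

lemma integral_nearest_sqdist_right_end:
  assumes "1 \<le> k" "finite T" "T \<subseteq> {u..v}" "v \<in> T" "card T = k" "u < v"
  shows "(v - u)^3 / (3 * (2 * real k - 1)\<^sup>2) \<le> integral {u..v} (nearest_sqdist T) \<and>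
    (integral {u..v} (nearest_sqdist T) = (v - u)^3 / (3 * (2 * real k - 1)\<^sup>2)
      \<longleftrightarrow> T = right_end_config u v k)"
proof (cases "k = 1")
  case True
  then have "T = {v}"
    using assms by (metis card_1_singletonE singletonD)
  then show ?thesis
    unfolding right_end_config_eq_grid[OF assms(1)] using True assms
    by (simp add: integral_nearest_sqdist_singleton) (simp add: power3_eq_cube algebra_simps)
next
  case False
  then obtain K where K: "k = Suc K" "1 \<le> K"
    using assms(1) by (cases k) auto
  then have K_eq: "2 * real k - 1 = 2 * real K + 1" "k - 1 = K"
    by simp_all
  show ?thesis
    unfolding right_end_config_eq_grid[OF assms(1)] K_eq
    using integral_nearest_sqdist_right_end_grid[OF K(2) assms(2-4) _ assms(6)] assms(5) K(1) by simp
qed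

lemma integral_nearest_sqdist_left_end:
  assumes "1 \<le> m" "finite T" "T \<subseteq> {u..v}" "u \<in> T" "card T = m" "u < v"
  shows "(v - u)^3 / (3 * (2 * real m - 1)\<^sup>2) \<le> integral {u..v} (nearest_sqdist T) \<and>
    (integral {u..v} (nearest_sqdist T) = (v - u)^3 / (3 * (2 * real m - 1)\<^sup>2)
      \<longleftrightarrow> T = left_end_config u v m)"
proof -
  define h where "h = (v - u) / (2 * real m - 1)"
  have reflect: "uminus ` uminus ` A = A" for A :: "real set"
    by (simp add: image_image)
  have "v - h - real (m - 1) * (2 * h) = u"
    using odd_multiple_span[OF assms(1) h_def] by linarith
  then have "uminus ` right_end_config (- v) (- u) m = left_end_config u v m"
    using assms(1) by (simp add: right_end_config_eq_grid left_end_config_eq_grid grid_reflect flip: h_def)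
  then have configs: "uminus ` T = right_end_config (- v) (- u) m \<longleftrightarrow> T = left_end_config u v m"
    by (metis reflect)
  have "finite (uminus ` T)" "uminus ` T \<subseteq> {- v..- u}" "- u \<in> uminus ` T" "card (uminus ` T) = m"
    using assms(2-5) by (auto simp: card_image)
  then show ?thesis
    using integral_nearest_sqdist_right_end[of m "uminus ` T" "- v" "- u"] assms(1,6) configs
    by (simp add: integral_nearest_sqdist_reflect[of u v T])
qed

section \<open>Optimal sets for the uniform distribution\<close>

lemma integral_uniform_interval:
  assumes "a < b" "continuous_on UNIV f"
  shows "(\<integral>x. f x \<partial>uniform_interval a b) = integral {a..b} f / (b - a)"
proof -
  have f: "f \<in> borel_measurable borel"
    using assms(2) by (rule borel_measurable_continuous_onI)
  have "1 / ennreal (b - a) = ennreal (1 / (b - a))"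
    using divide_ennreal[of 1 "b - a"] assms(1) by simp
  then have density: "uniform_interval a b = density lborel (\<lambda>x. ennreal (indicator {a..b} x / (b - a)))"
    unfolding uniform_interval_def uniform_measure_def
    using assms(1) by (intro density_cong) (auto simp: indicator_def)
  have "(\<integral>x. f x \<partial>uniform_interval a b) = (\<integral>x. indicator {a..b} x * f x \<partial>lborel) / (b - a)"
    unfolding density using f assms(1) by (simp add: integral_density mult.assoc)
  also have "(\<integral>x. indicator {a..b} x * f x \<partial>lborel) = integral {a..b} f"
    using set_borel_integral_eq_integral[OF borel_integrable_atLeastAtMost'[of a b f]]
      continuous_on_subset[OF assms(2)]
    by (simp add: set_lebesgue_integral_def)
  finally show ?thesis .
qed

lemma cond_distortion_uniform_interval:
  assumes "a < b" "finite \<alpha>" "finite \<beta>" "\<beta> \<noteq> {}"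
  shows "cond_distortion (uniform_interval a b) \<beta> \<alpha> = integral {a..b} (nearest_sqdist (\<alpha> \<union> \<beta>)) / (b - a)"
  unfolding cond_distortion_def nearest_sqdist_def[symmetric]
  using assms by (intro integral_uniform_interval continuous_on_nearest_sqdist) auto

lemma cond_qerror_le_cond_distortion:
  assumes "finite \<beta>" "\<beta> \<noteq> {}" "finite \<alpha>" "card \<alpha> \<le> n - card \<beta>"
  shows "cond_qerror P \<beta> n \<le> cond_distortion P \<beta> \<alpha>"
  unfolding cond_qerror_def
proof (rule cINF_lower)
  show "bdd_below (cond_distortion P \<beta> ` {\<alpha>. finite \<alpha> \<and> card \<alpha> \<le> n - card \<beta>})"
    using assms(1,2)
    by (intro bdd_belowI2[of _ 0])
       (auto simp: cond_distortion_def nearest_sqdist_def[symmetric]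
         intro!: Bochner_Integration.integral_nonneg nearest_sqdist_nonneg)
qed (use assms in auto)

lemma cond_optimal_set_uniform_interval:
  assumes "cond_optimal_set (uniform_interval a b) \<beta> n G" "a < b" "finite \<beta>" "\<beta> \<noteq> {}"
  shows "finite G \<and> \<beta> \<subseteq> G \<and> card G \<le> n \<and>
    integral {a..b} (nearest_sqdist G) = (b - a) * cond_qerror (uniform_interval a b) \<beta> n"
proof -
  obtain \<alpha> where \<alpha>: "finite \<alpha>" "card \<alpha> \<le> n - card \<beta>" "G = \<alpha> \<union> \<beta>" "card \<beta> \<le> n"
    "cond_distortion (uniform_interval a b) \<beta> \<alpha> = cond_qerror (uniform_interval a b) \<beta> n"
    using assms(1) unfolding cond_optimal_set_def by blast
  have "card G \<le> card \<alpha> + card \<beta>"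
    unfolding \<alpha>(3) by (rule card_Un_le)
  then show ?thesis
    using \<alpha> assms(2-4) by (simp add: cond_distortion_uniform_interval field_simps)
qed

text \<open>\<open>b - a\<close> times the error of the three optimal configurations with \<open>k\<close>, \<open>l\<close> and \<open>m\<close>
  points on \<open>[a, c]\<close>, \<open>[c, d]\<close> and \<open>[d, b]\<close>.\<close>

definition piecewise_error :: "real \<Rightarrow> real \<Rightarrow> real \<Rightarrow> real \<Rightarrow> nat \<Rightarrow> nat \<Rightarrow> nat \<Rightarrow> real" where
  "piecewise_error a c d b k l m = (c - a)^3 / (3 * (2 * real k - 1)\<^sup>2)
     + (d - c)^3 / (12 * (real l - 1)\<^sup>2) + (b - d)^3 / (3 * (2 * real m - 1)\<^sup>2)"

lemma card_three_pieces:
  fixes a b c d :: real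
  assumes "a < c" "c < d" "d < b" "finite S" "S \<subseteq> {a..b}" "c \<in> S" "d \<in> S"
  shows "card (S \<inter> {a..c}) + card (S \<inter> {c..d}) + card (S \<inter> {d..b}) = card S + 2"
proof -
  have "(S \<inter> {a..c}) \<inter> (S \<inter> {c..d}) = {c}" "(S \<inter> {a..c} \<union> S \<inter> {c..d}) \<inter> (S \<inter> {d..b}) = {d}"
    "S \<inter> {a..c} \<union> S \<inter> {c..d} \<union> S \<inter> {d..b} = S"
    using assms by auto
  then show ?thesis
    using card_Un_Int[of "S \<inter> {a..c}" "S \<inter> {c..d}"] card_Un_Int[of "S \<inter> {a..c} \<union> S \<inter> {c..d}" "S \<inter> {d..b}"]
      assms(4) by simp
qed

lemma integral_nearest_sqdist_three_pieces:
  assumes "a < c" "c < d" "d < b" "finite S" "S \<subseteq> {a..b}" "c \<in> S" "d \<in> S"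
  defines "k \<equiv> card (S \<inter> {a..c})" and "l \<equiv> card (S \<inter> {c..d})" and "m \<equiv> card (S \<inter> {d..b})"
  shows "piecewise_error a c d b k l m \<le> integral {a..b} (nearest_sqdist S) \<and>
    (integral {a..b} (nearest_sqdist S) = piecewise_error a c d b k l m \<longleftrightarrow>
      S \<inter> {a..c} = right_end_config a c k \<and> S \<inter> {c..d} = both_ends_config c d l \<and>
      S \<inter> {d..b} = left_end_config d b m)"
proof -
  define IL where "IL = integral {a..c} (nearest_sqdist (S \<inter> {a..c}))"
  define IM where "IM = integral {c..d} (nearest_sqdist (S \<inter> {c..d}))"
  define IR where "IR = integral {d..b} (nearest_sqdist (S \<inter> {d..b}))"
  have "S \<inter> {..c} = S \<inter> {a..c}" "S \<inter> {c..} \<inter> {..d} = S \<inter> {c..d}" "S \<inter> {c..} \<inter> {d..} = S \<inter> {d..b}"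
    using assms(2,5) by auto
  then have split: "integral {a..b} (nearest_sqdist S) = IL + IM + IR"
    using integral_nearest_sqdist_split[of S c a b] integral_nearest_sqdist_split[of "S \<inter> {c..}" d c b]
      assms(1-4,6,7)
    by (simp add: IL_def IM_def IR_def)
  have fin: "finite (S \<inter> A)" for A
    using assms(4) by simp
  have mem: "c \<in> S \<inter> {a..c}" "c \<in> S \<inter> {c..d}" "d \<in> S \<inter> {c..d}" "d \<in> S \<inter> {d..b}"
    using assms by auto
  have cards: "card (S \<inter> {a..c}) = k" "card (S \<inter> {c..d}) = l" "card (S \<inter> {d..b}) = m"
    by (simp_all add: k_def l_def m_def)
  have "card {c, d} \<le> l"
    unfolding l_def using mem(2,3) by (intro card_mono fin) auto
  then have "2 \<le> l"
    using assms(2) by simp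
  have "S \<inter> {a..c} \<noteq> {}" "S \<inter> {d..b} \<noteq> {}"
    using mem(1,4) by blast+
  then have "1 \<le> k" "1 \<le> m"
    unfolding cards(1,3)[symmetric] using fin by (simp_all add: Suc_le_eq card_gt_0_iff)
  note L = integral_nearest_sqdist_right_end[OF \<open>1 \<le> k\<close> fin Int_lower2 mem(1) cards(1) assms(1), folded IL_def]
  note M = integral_nearest_sqdist_both_ends[OF \<open>2 \<le> l\<close> fin Int_lower2 mem(2,3) cards(2) assms(2), folded IM_def]
  note R = integral_nearest_sqdist_left_end[OF \<open>1 \<le> m\<close> fin Int_lower2 mem(4) cards(3) assms(3), folded IR_def]
  have bounds: "(c - a)^3 / (3 * (2 * real k - 1)\<^sup>2) \<le> IL" "(d - c)^3 / (12 * (real l - 1)\<^sup>2) \<le> IM"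
      "(b - d)^3 / (3 * (2 * real m - 1)\<^sup>2) \<le> IR"
    using L M R by blast+
  then have "IL + IM + IR = piecewise_error a c d b k l m
      \<longleftrightarrow> IL = (c - a)^3 / (3 * (2 * real k - 1)\<^sup>2) \<and> IM = (d - c)^3 / (12 * (real l - 1)\<^sup>2)
        \<and> IR = (b - d)^3 / (3 * (2 * real m - 1)\<^sup>2)"
    unfolding piecewise_error_def by (intro iffI conjI) linarith+
  then show ?thesis
    unfolding split using bounds L M R by (auto simp: piecewise_error_def)
qed

lemma cond_qerror_uniform_le_piecewise_error:
  assumes "a < c" "c < d" "d < b" "1 \<le> k" "2 \<le> l" "1 \<le> m" "k + l + m \<le> n + 2"
  shows "(b - a) * cond_qerror (uniform_interval a b) {c, d} n \<le> piecewise_error a c d b k l m"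
proof -
  define S where "S = right_end_config a c k \<union> both_ends_config c d l \<union> left_end_config d b m"
  note L = right_end_config_props[OF assms(4,1)]
  note M = both_ends_config_props[OF assms(5,2)]
  note R = left_end_config_props[OF assms(6,3)]
  have pieces: "S \<inter> {a..c} = right_end_config a c k" "S \<inter> {c..d} = both_ends_config c d l"
    "S \<inter> {d..b} = left_end_config d b m"
    using L M R assms(1-3) unfolding S_def by fastforce+
  have S: "finite S" "S \<subseteq> {a..b}" "c \<in> S" "d \<in> S"
    using L M R assms(1-3) unfolding S_def by fastforce+
  have "card S + 2 \<le> n + 2"
    using card_three_pieces[OF assms(1-3) S] pieces L(4) M(5) R(4) assms(7) by simp
  then have card: "card (S - {c, d}) \<le> n - card {c, d}"
    using S assms(2) by (simp add: card_Diff_subset)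
  have "S - {c, d} \<union> {c, d} = S"
    using S by auto
  then have "cond_distortion (uniform_interval a b) {c, d} (S - {c, d})
      = integral {a..b} (nearest_sqdist S) / (b - a)"
    using cond_distortion_uniform_interval[of a b "S - {c, d}" "{c, d}"] S assms(1-3) by simp
  moreover have "cond_qerror (uniform_interval a b) {c, d} n
      \<le> cond_distortion (uniform_interval a b) {c, d} (S - {c, d})"
    using cond_qerror_le_cond_distortion[OF _ _ _ card] S by simp
  ultimately have "cond_qerror (uniform_interval a b) {c, d} n \<le> integral {a..b} (nearest_sqdist S) / (b - a)"
    by simp
  then have "(b - a) * cond_qerror (uniform_interval a b) {c, d} n \<le> integral {a..b} (nearest_sqdist S)"
    using assms(1-3) by (simp add: pos_le_divide_eq mult.commute)
  also have "\<dots> = piecewise_error a c d b k l m"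
    using integral_nearest_sqdist_three_pieces[OF assms(1-3) S] pieces L(4) M(5) R(4) by simp
  finally show ?thesis .
qed

lemma integral_nearest_sqdist_clamp_le:
  assumes "finite G" "G \<noteq> {}" "a \<le> b"
  shows "integral {a..b} (nearest_sqdist ((\<lambda>p. max a (min b p)) ` G)) \<le> integral {a..b} (nearest_sqdist G)"
proof (rule integral_le)
  fix x assume "x \<in> {a..b}"
  show "nearest_sqdist ((\<lambda>p. max a (min b p)) ` G) x \<le> nearest_sqdist G x"
  proof (rule nearest_sqdist_le_nearest_sqdist)
    fix p assume "p \<in> G"
    then show "\<exists>q\<in>(\<lambda>p. max a (min b p)) ` G. \<bar>x - q\<bar> \<le> \<bar>x - p\<bar>"
      using \<open>x \<in> {a..b}\<close> by (intro bexI[of _ "max a (min b p)"]) (auto simp: max_def min_def abs_if)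
  qed (use assms in auto)
qed (use assms in \<open>simp_all add: integrable_nearest_sqdist\<close>)

lemma piecewise_error_Suc_less:
  assumes "a < c" "1 \<le> k"
  shows "piecewise_error a c d b (Suc k) l m < piecewise_error a c d b k l m"
proof -
  have "(c - a)^3 / (3 * (2 * real (Suc k) - 1)\<^sup>2) < (c - a)^3 / (3 * (2 * real k - 1)\<^sup>2)"
    using assms by (intro divide_strict_left_mono mult_strict_left_mono power_strict_mono) auto
  then show ?thesis
    by (simp add: piecewise_error_def)
qed

text \<open>Moving the points of a conditional optimal set into \<open>[a, b]\<close> cannot increase the
  distortion, so the clamped set is optimal as well; by rigidity of the one-interval bounds its
  three pieces are the equally spaced configurations, which avoid \<open>a\<close> and \<open>b\<close>, so clamping
  moved no point.\<close>

lemma optimal_set_pieces: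
  fixes a b c d :: real
  assumes "a < c" "c < d" "d < b" "finite G" "c \<in> G" "d \<in> G" "card G \<le> n"
    and opt: "integral {a..b} (nearest_sqdist G) \<le> (b - a) * cond_qerror (uniform_interval a b) {c, d} n"
  defines "k \<equiv> card (G \<inter> {a..c})" and "l \<equiv> card (G \<inter> {c..d})" and "m \<equiv> card (G \<inter> {d..b})"
  shows "G \<inter> {a..c} = right_end_config a c k \<and> G \<inter> {c..d} = both_ends_config c d l \<and>
    G \<inter> {d..b} = left_end_config d b m \<and> k + l + m \<le> n + 2 \<and>
    (b - a) * cond_qerror (uniform_interval a b) {c, d} n = piecewise_error a c d b k l m"
proof -
  define G' where "G' = (\<lambda>p. max a (min b p)) ` G"
  define k' where "k' = card (G' \<inter> {a..c})"
  define l' where "l' = card (G' \<inter> {c..d})"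
  define m' where "m' = card (G' \<inter> {d..b})"
  have "max a (min b c) = c" "max a (min b d) = d"
    using assms(1-3) by auto
  then have G': "finite G'" "G' \<subseteq> {a..b}" "c \<in> G'" "d \<in> G'"
    using assms(1-6) unfolding G'_def by (auto intro: image_eqI[where x = c] image_eqI[where x = d])
  have "card G' \<le> n"
    using card_image_le[OF assms(4)] assms(7) unfolding G'_def by (meson order_trans)
  then have counts: "k' + l' + m' \<le> n + 2"
    using card_three_pieces[OF assms(1-3) G'] by (simp add: k'_def l'_def m'_def)
  have "{c, d} \<subseteq> G' \<inter> {c..d}"
    using G' assms(2) by auto
  then have bounds: "1 \<le> k'" "2 \<le> l'" "1 \<le> m'"
    using G' assms(1-3) card_mono[of "G' \<inter> {c..d}" "{c, d}"]
    by (auto simp: k'_def l'_def m'_def card_gt_0_iff Suc_le_eq)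
  note pieces = integral_nearest_sqdist_three_pieces[OF assms(1-3) G', folded k'_def l'_def m'_def]
  have "integral {a..b} (nearest_sqdist G') \<le> integral {a..b} (nearest_sqdist G)"
    unfolding G'_def using assms(1-5) by (intro integral_nearest_sqdist_clamp_le) auto
  then have min: "integral {a..b} (nearest_sqdist G') = piecewise_error a c d b k' l' m'"
    "(b - a) * cond_qerror (uniform_interval a b) {c, d} n = piecewise_error a c d b k' l' m'"
    using pieces opt cond_qerror_uniform_le_piecewise_error[OF assms(1-3) bounds counts] by linarith+
  then have configs: "G' \<inter> {a..c} = right_end_config a c k'" "G' \<inter> {c..d} = both_ends_config c d l'"
    "G' \<inter> {d..b} = left_end_config d b m'"
    using pieces by simp_all
  have "a \<notin> G' \<inter> {a..c}" "b \<notin> G' \<inter> {d..b}"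
    using configs right_end_config_props(2)[OF bounds(1) assms(1)]
      left_end_config_props(2)[OF bounds(3) assms(3)] by auto
  then have "G \<inter> {a..c} = G' \<inter> {a..c}" "G \<inter> {c..d} = G' \<inter> {c..d}" "G \<inter> {d..b} = G' \<inter> {d..b}"
    using assms(1-3) unfolding G'_def by (force simp: max_def min_def)+
  moreover from this have "k = k'" "l = l'" "m = m'"
    by (simp_all add: k_def l_def m_def k'_def l'_def m'_def)
  ultimately show ?thesis
    using configs min counts by simp
qed

lemma optimal_card_sum:
  assumes "a < c" "c < d" "d < b" "1 \<le> k" "2 \<le> l" "1 \<le> m" "k + l + m \<le> n + 2"
    and "(b - a) * cond_qerror (uniform_interval a b) {c, d} n = piecewise_error a c d b k l m"
  shows "k + l + m = n + 2"
proof (rule ccontr)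
  assume "k + l + m \<noteq> n + 2"
  then have "Suc k + l + m \<le> n + 2"
    using assms(7) by simp
  then have "(b - a) * cond_qerror (uniform_interval a b) {c, d} n \<le> piecewise_error a c d b (Suc k) l m"
    using assms(1-6) by (intro cond_qerror_uniform_le_piecewise_error) auto
  then show False
    using piecewise_error_Suc_less[OF assms(1,4), of d b l m] assms(8) by linarith
qed

theorem proposition2p1:
  fixes a b c d :: real and n k l m :: nat and \<alpha>n :: "real set"
  assumes "a < c" and "c < d" and "d < b" and "n \<ge> 2"
    and "cond_optimal_set (uniform_interval a b) {c, d} n \<alpha>n"
    and "card (\<alpha>n \<inter> {a..c}) = k" and "card (\<alpha>n \<inter> {c..d}) = l"
    and "card (\<alpha>n \<inter> {d..b}) = m"
    and "k \<ge> 1" and "m \<ge> 1" and "l \<ge> 2"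
  shows "k + l + m = n + 2
    \<and> \<alpha>n \<inter> {a..c} = {a + (2 * real j - 1) * (c - a) / (2 * real k - 1) | j. 1 \<le> j \<and> j \<le> k}
    \<and> \<alpha>n \<inter> {c..d} = {c + (real j - 1) / (real l - 1) * (d - c) | j. 1 \<le> j \<and> j \<le> l}
    \<and> \<alpha>n \<inter> {d..b} = {d + 2 * (real j - 1) * (b - d) / (2 * real m - 1) | j. 1 \<le> j \<and> j \<le> m}
    \<and> cond_qerror (uniform_interval a b) {c, d} n
        = 1 / (3 * (b - a)) * ((c - a) ^ 3 / (2 * real k - 1)\<^sup>2
            + 1 / 4 * (d - c) ^ 3 / (real l - 1)\<^sup>2
            + (b - d) ^ 3 / (2 * real m - 1)\<^sup>2)"
proof -
  have "finite \<alpha>n" "{c, d} \<subseteq> \<alpha>n" "card \<alpha>n \<le> n"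
    "integral {a..b} (nearest_sqdist \<alpha>n) = (b - a) * cond_qerror (uniform_interval a b) {c, d} n"
    using cond_optimal_set_uniform_interval[OF assms(5)] assms(1-3) by auto
  then have pieces: "\<alpha>n \<inter> {a..c} = right_end_config a c k" "\<alpha>n \<inter> {c..d} = both_ends_config c d l"
      "\<alpha>n \<inter> {d..b} = left_end_config d b m" "k + l + m \<le> n + 2"
    and error: "(b - a) * cond_qerror (uniform_interval a b) {c, d} n = piecewise_error a c d b k l m"
    using optimal_set_pieces[OF assms(1-3), of \<alpha>n n] assms(6-8) by auto
  have sum: "k + l + m = n + 2"
    using optimal_card_sum[OF assms(1-3,9,11,10) pieces(4) error] .
  have "2 * real k - 1 \<noteq> 0" "real l - 1 \<noteq> 0" "2 * real m - 1 \<noteq> 0" "b - a \<noteq> 0"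
    using assms(1-3,9-11) by auto
  then have error_formula: "cond_qerror (uniform_interval a b) {c, d} n
      = 1 / (3 * (b - a)) * ((c - a) ^ 3 / (2 * real k - 1)\<^sup>2
          + 1 / 4 * (d - c) ^ 3 / (real l - 1)\<^sup>2 + (b - d) ^ 3 / (2 * real m - 1)\<^sup>2)"
    using error by (simp add: piecewise_error_def field_simps)
  show ?thesis
    using sum error_formula pieces(1-3) unfolding right_end_config_def both_ends_config_def left_end_config_def
    by blast
qed

end
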